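(* Let $N\ge 3$. There exists a subset $\mathbb{S}\subset\mathbb{R}_+$ which is dense in $\mathbb{R}_+$ such that for every $M\in\mathbb{S}$ the equation $$V_{ss}+(5-N)V_s s^{-1}+\tfrac12 V_s s^{-3}-V_sVs^{-1}-2(N-2)Vs^{-2}+(N-2)V^2s^{-2}=0$$ admits a local solution $V$ with $V(0)=M$, i.e. there is $L>0$ and $V\in C([0,L])\cap C^2((0,L))$ satisfying the equation on $(0,L)$ with $V(0)=M$.
   Context: $\mathbb{R}_+=(0,\infty)$. This equation arises from the stationary self-similar equation $\phi_{\xi\xi}+(\frac{N+1}{\xi}-\frac{\xi}{2})\phi_\xi-\phi+\phi(\xi\phi_\xi+N\phi)=0$ via $V(s)=\phi(\xi)\xi^2$, $s=1/\xi$. *)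

theory Defs
  imports "HOL-Analysis.Analysis"
begin

definition local_solution :: "nat \<Rightarrow> real \<Rightarrow> real \<Rightarrow> (real \<Rightarrow> real) \<Rightarrow> bool" where
  "local_solution N M L V \<longleftrightarrow>
     L > 0 \<and> continuous_on {0..L} V \<and> V 0 = M \<and>
     (\<exists>V1 V2. (\<forall>s\<in>{0<..<L}. (V has_real_derivative V1 s) (at s) \<and>
                              (V1 has_real_derivative V2 s) (at s)) \<and>
              continuous_on {0<..<L} V2 \<and>
              (\<forall>s\<in>{0<..<L}.
                 V2 s + (5 - real N) * V1 s / s + V1 s / (2 * s ^ 3) - V1 s * V s / s
                 - 2 * (real N - 2) * V s / s\<^sup>2 + (real N - 2) * (V s)\<^sup>2 / s\<^sup>2 = 0))"

end

theory Submission
  imports Defs "HOL-Real_Asymp.Real_Asymp"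
begin

(* Substituting V' = s w turns the equation into the first-order linear equation
     s^3 w' + (s^2 + 1/2) w = (N - 2) V (2 - V) + s^2 (V - 5 + N) w,   V(s) = M + int_0^s t w(t) dt.
   Its integrating factor mu(s) = s exp(-1/(4 s^2)) is flat at s = 0, and multiplying by it gives
   the fixed-point problem: w(s) is the mu'-weighted mean over [0, s] of 2 rho(t) / (1 + 2 t^2),
   rho being the right-hand side. Weighted means do not increase sup norms and |V - M| <= s^2 sup |w|,
   so on a short interval [0, L] this map is a contraction of a ball of C[0, L]. Banach's fixed point
   theorem then gives a local solution with V(0) = M for every real M, so S = R_+ will do. *)

section \<open>Weighted means\<close>

locale averaging_weight =
  fixes g :: "real \<Rightarrow> real"
  assumes continuous: "continuous_on UNIV g"
    and nonneg: "0 \<le> g t"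
    and mass_pos: "0 < s \<Longrightarrow> 0 < integral {0..s} g"
begin

(* At s = 0 the quotient would be 0 / 0; f 0 is its continuous extension. *)
definition mean :: "(real \<Rightarrow> real) \<Rightarrow> real \<Rightarrow> real" where
  "mean f s = (if s = 0 then f 0 else integral {0..s} (\<lambda>t. g t * f t) / integral {0..s} g)"

lemma continuous_on_weighted: "continuous_on S f \<Longrightarrow> continuous_on S (\<lambda>t. g t * f t)"
  by (intro continuous_intros continuous_on_subset[OF continuous]) auto

lemma integrable_weighted: "continuous_on {a..b} f \<Longrightarrow> (\<lambda>t. g t * f t) integrable_on {a..b}"
  by (intro integrable_continuous_interval continuous_on_weighted)

lemma abs_mean_le:
  assumes f: "continuous_on {0..s} f" and s: "0 \<le> s" and B: "\<And>t. t \<in> {0..s} \<Longrightarrow> \<bar>f t\<bar> \<le> B"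
  shows "\<bar>mean f s\<bar> \<le> B"
proof (cases "s = 0")
  case True
  then show ?thesis using B[of 0] by (simp add: mean_def)
next
  case False
  then have mass: "0 < integral {0..s} g" using s mass_pos by simp
  have g_int: "g integrable_on {0..s}"
    by (intro integrable_continuous_interval continuous_on_subset[OF continuous]) auto
  have "norm (integral {0..s} (\<lambda>t. g t * f t)) \<le> integral {0..s} (\<lambda>t. g t * B)"
  proof (rule integral_norm_bound_integral)
    show "(\<lambda>t. g t * f t) integrable_on {0..s}" by (rule integrable_weighted[OF f])
    show "(\<lambda>t. g t * B) integrable_on {0..s}" using g_int by (rule integrable_on_mult_left)
  qed (use B nonneg in \<open>auto simp: abs_mult intro: mult_left_mono\<close>)
  also have "\<dots> = integral {0..s} g * B" by simp
  finally show ?thesis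
    using False mass by (simp add: mean_def pos_divide_le_eq mult.commute)
qed

lemma mean_const: "0 \<le> s \<Longrightarrow> mean (\<lambda>_. c) s = c"
  using mass_pos[of s] by (cases "s = 0") (auto simp: mean_def)

lemma mean_diff:
  assumes "continuous_on {0..s} f" "continuous_on {0..s} h"
  shows "mean (\<lambda>t. f t - h t) s = mean f s - mean h s"
proof -
  have "integral {0..s} (\<lambda>t. g t * (f t - h t)) =
        integral {0..s} (\<lambda>t. g t * f t) - integral {0..s} (\<lambda>t. g t * h t)"
    unfolding right_diff_distrib by (intro integral_diff integrable_weighted assms)
  then show ?thesis by (simp add: mean_def diff_divide_distrib)
qed

lemma abs_mean_minus_start_le:
  assumes f: "continuous_on {0..s} f" and s: "0 \<le> s"
    and e: "\<And>t. t \<in> {0..s} \<Longrightarrow> \<bar>f t - f 0\<bar> \<le> e"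
  shows "\<bar>mean f s - f 0\<bar> \<le> e"
proof -
  have "mean f s - f 0 = mean (\<lambda>t. f t - f 0) s"
    using f s by (simp add: mean_diff mean_const)
  also have "\<bar>\<dots>\<bar> \<le> e"
    using f s e by (intro abs_mean_le continuous_intros) auto
  finally show ?thesis .
qed

lemma continuous_on_mean:
  assumes f: "continuous_on {0..L} f"
  shows "continuous_on {0..L} (mean f)"
  unfolding continuous_on_eq_continuous_within
proof
  fix x assume x: "x \<in> {0..L}"
  show "continuous (at x within {0..L}) (mean f)"
  proof (cases "x = 0")
    case False
    define I where "I s = integral {0..s} (\<lambda>t. g t * f t)" for s
    define G where "G s = integral {0..s} g" for s
    have "continuous_on {0..L} g"
      by (rule continuous_on_subset[OF continuous]) simp
    then have "continuous_on {0..L} I" "continuous_on {0..L} G"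
      unfolding I_def G_def
      by (auto intro!: indefinite_integral_continuous_1 integrable_continuous_interval
          continuous_on_weighted f)
    then have "((\<lambda>s. I s / G s) \<longlongrightarrow> I x / G x) (at x within {0..L})"
      using x False mass_pos[of x]
      by (intro tendsto_divide) (auto simp: continuous_on_def G_def)
    moreover have "\<forall>\<^sub>F s in at x within {0..L}. I s / G s = mean f s"
      using filter_leD[OF at_within_le_nhds t1_space_nhds[OF False]]
      by eventually_elim (simp add: mean_def I_def G_def)
    ultimately show ?thesis
      using False by (simp add: continuous_within mean_def I_def G_def Lim_transform_eventually)
  next
    case True
    show ?thesis
      unfolding True continuous_within_eps_delta
    proof (intro allI impI)
      fix e :: real assume "0 < e"
      then obtain d where d: "0 < d" "\<And>t. t \<in> {0..L} \<Longrightarrow> dist t 0 < d \<Longrightarrow> dist (f t) (f 0) < e / 2"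
        using f x True half_gt_zero unfolding continuous_on_iff by metis
      have "\<bar>mean f s - f 0\<bar> < e" if s: "s \<in> {0..L}" "dist s 0 < d" for s
      proof -
        have "\<bar>mean f s - f 0\<bar> \<le> e / 2"
          using s d(2) by (intro abs_mean_minus_start_le continuous_on_subset[OF f])
            (auto simp: dist_real_def intro: less_imp_le)
        then show ?thesis using \<open>0 < e\<close> by linarith
      qed
      then show "\<exists>d>0. \<forall>s\<in>{0..L}. dist s 0 < d \<longrightarrow> dist (mean f s) (mean f 0) < e"
        using d(1) by (auto simp: dist_real_def mean_def[of f 0])
    qed
  qed
qed

end

section \<open>Fixed points of operators on C[0, L]\<close>

lemma Banach_fix_on_interval:
  fixes F :: "(real \<Rightarrow> real) \<Rightarrow> real \<Rightarrow> real"
  assumes L: "0 \<le> L" and R: "0 \<le> R" and c: "0 \<le> c" "c < 1"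
    and cont: "\<And>w. continuous_on UNIV w \<Longrightarrow> continuous_on {0..L} (F w)"
    and bound: "\<And>w x. continuous_on UNIV w \<Longrightarrow> (\<And>y. \<bar>w y\<bar> \<le> R) \<Longrightarrow> x \<in> {0..L} \<Longrightarrow>
      \<bar>F w x\<bar> \<le> R"
    and lipschitz: "\<And>w1 w2 D x. continuous_on UNIV w1 \<Longrightarrow> continuous_on UNIV w2 \<Longrightarrow>
      (\<And>y. \<bar>w1 y\<bar> \<le> R) \<Longrightarrow> (\<And>y. \<bar>w2 y\<bar> \<le> R) \<Longrightarrow> (\<And>y. \<bar>w1 y - w2 y\<bar> \<le> D) \<Longrightarrow>
      x \<in> {0..L} \<Longrightarrow> \<bar>F w1 x - F w2 x\<bar> \<le> c * D"
  shows "\<exists>w. continuous_on UNIV w \<and> (\<forall>x\<in>{0..L}. w x = F w x)"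
proof -
  define X where "X = cball (0 :: real \<Rightarrow>\<^sub>C real) R"
  define T where "T w = Bcontfun (ext_cont (F (apply_bcontfun w)) 0 L)" for w
  have clamp: "clamp 0 L x \<in> {0..L}" for x :: real
    using L clamp_in_interval[of 0 L x] by simp
  have X_iff: "w \<in> X \<longleftrightarrow> (\<forall>y. \<bar>apply_bcontfun w y\<bar> \<le> R)" for w
    unfolding X_def using norm_bounded[of w] norm_bound[of w R]
    by (auto intro: order_trans)
  have T_apply: "apply_bcontfun (T w) = ext_cont (F (apply_bcontfun w)) 0 L" if "w \<in> X" for w
  proof -
    have "continuous_on (cbox 0 L) (F (apply_bcontfun w))"
      using cont[of "apply_bcontfun w"] by simp
    then have "ext_cont (F (apply_bcontfun w)) 0 L \<in> bcontfun"
      using that clamp bound[of "apply_bcontfun w"]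
      by (intro bcontfun_normI continuous_on_ext_cont) (auto simp: X_iff ext_cont_def)
    then show ?thesis
      unfolding T_def by (rule Bcontfun_inverse)
  qed
  have "T ` X \<subseteq> X"
    using clamp bound T_apply by (auto simp: X_iff ext_cont_def)
  moreover have "dist (T v) (T w) \<le> c * dist v w" if "v \<in> X" "w \<in> X" for v w
  proof (rule dist_bound)
    fix x
    show "dist (T v x) (T w x) \<le> c * dist v w"
      using that clamp T_apply dist_bounded[of v _ w]
      by (auto simp: X_iff ext_cont_def dist_real_def intro!: lipschitz)
  qed
  moreover have "complete X" "X \<noteq> {}"
    using R by (auto simp: X_def complete_eq_closed)
  ultimately obtain w where "w \<in> X" "T w = w"
    using Banach_fix[OF _ _ c] by blast
  then have "apply_bcontfun w x = F (apply_bcontfun w) x" if "x \<in> {0..L}" for x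
    using T_apply[of w] that by (metis cbox_interval ext_cont_cancel_cbox)
  then show ?thesis
    by (intro exI[of _ "apply_bcontfun w"]) auto
qed

section \<open>The integrating factor\<close>

(* mu is the integrating factor of w \<mapsto> s^3 w' + (s^2 + 1/2) w, since mu'/mu = 1/s + 1/(2 s^3). *)
definition mu :: "real \<Rightarrow> real" where
  "mu t = t * exp (-1 / (4 * t\<^sup>2))"

definition mu' :: "real \<Rightarrow> real" where
  "mu' t = (if t = 0 then 0 else exp (-1 / (4 * t\<^sup>2)) * (1 + 1 / (2 * t\<^sup>2)))"

lemma mu_0 [simp]: "mu 0 = 0"
  by (simp add: mu_def)

lemma mu_pos: "0 < s \<Longrightarrow> 0 < mu s"
  by (simp add: mu_def)

lemma mu'_nonneg: "0 \<le> mu' t"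
  by (simp add: mu'_def)

lemma mu_has_real_derivative: "t \<noteq> 0 \<Longrightarrow> (mu has_real_derivative mu' t) (at t)"
  unfolding mu_def[abs_def] mu'_def
  by (auto intro!: derivative_eq_intros)
    (simp add: field_simps power2_eq_square power3_eq_cube eval_nat_numeral)

lemma isCont_mu: "isCont mu x"
proof (cases "x = 0")
  case True
  have "((\<lambda>t::real. t * exp (-1 / (4 * t\<^sup>2))) \<longlongrightarrow> 0) (at 0)"
    by real_asymp
  then show ?thesis
    using True by (simp add: isCont_def mu_def[abs_def])
next
  case False
  then show ?thesis
    using mu_has_real_derivative by (blast intro: DERIV_isCont)
qed

lemma isCont_mu': "isCont mu' x"
proof (cases "x = 0")
  case True
  have "((\<lambda>t::real. exp (-1 / (4 * t\<^sup>2)) * (1 + 1 / (2 * t\<^sup>2))) \<longlongrightarrow> 0) (at 0)"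
    by real_asymp
  then have "(mu' \<longlongrightarrow> 0) (at 0)"
    by (rule Lim_transform_eventually) (auto simp: eventually_at_filter mu'_def)
  then show ?thesis
    using True by (simp add: isCont_def mu'_def)
next
  case False
  have "isCont (\<lambda>t. exp (-1 / (4 * t\<^sup>2)) * (1 + 1 / (2 * t\<^sup>2))) x"
    using False by (intro continuous_intros) auto
  moreover have "\<forall>\<^sub>F t in nhds x. exp (-1 / (4 * t\<^sup>2)) * (1 + 1 / (2 * t\<^sup>2)) = mu' t"
    using t1_space_nhds[OF False] by eventually_elim (simp add: mu'_def)
  ultimately show ?thesis
    by (simp add: isCont_cong)
qed

lemma mu'_has_integral: "0 \<le> s \<Longrightarrow> (mu' has_integral mu s) {0..s}"
  using fundamental_theorem_of_calculus_interior[of 0 s mu mu']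
    isCont_mu mu_has_real_derivative
  by (force simp: continuous_at_imp_continuous_on has_real_derivative_iff_has_vector_derivative)

lemma integral_mu': "0 \<le> s \<Longrightarrow> integral {0..s} mu' = mu s"
  using mu'_has_integral by (rule integral_unique)

interpretation mu_weight: averaging_weight mu'
proof
  show "continuous_on UNIV mu'"
    using isCont_mu' by (simp add: continuous_at_imp_continuous_on)
  show "0 < s \<Longrightarrow> 0 < integral {0..s} mu'" for s
    by (simp add: integral_mu' mu_pos)
qed (rule mu'_nonneg)

lemma one_plus_two_sq_pos: "0 < 1 + 2 * (t::real)\<^sup>2"
  by (simp add: add_pos_nonneg)

lemma mu_mean_solves_linear_ode:
  assumes rho: "continuous_on {0..L} rho"
    and w: "\<And>x. x \<in> {0<..<L} \<Longrightarrow> w x = mu_weight.mean (\<lambda>t. 2 * rho t / (1 + 2 * t\<^sup>2)) x"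
    and s: "s \<in> {0<..<L}"
  shows "((\<lambda>x. x * w x) has_real_derivative (rho s - w s / 2) / s\<^sup>2) (at s)"
proof -
  define src where "src t = 2 * rho t / (1 + 2 * t\<^sup>2)" for t
  define J where "J x = integral {0..x} (\<lambda>t. mu' t * src t)" for x
  have src: "continuous_on {0..L} src"
    unfolding src_def
    by (intro continuous_intros rho) (auto simp: one_plus_two_sq_pos[THEN less_imp_neq, symmetric])
  have w_J: "w x = J x / mu x" if "x \<in> {0<..<L}" for x
    using w[OF that] that by (simp add: mu_weight.mean_def integral_mu' J_def src_def)
  have "(J has_real_derivative mu' s * src s) (at s within {0..L})"
    unfolding J_def using s by (intro integral_has_real_derivative mu_weight.continuous_on_weighted src) auto
  moreover have "at s within {0..L} = at s"
    using s by (intro at_within_interior) simp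
  ultimately have dJ: "(J has_real_derivative mu' s * src s) (at s)"
    by simp
  have s0: "0 < s" and mu_s: "0 < mu s"
    using s mu_pos by auto
  have "((\<lambda>x. x * (J x / mu x)) has_real_derivative
      1 * (J s / mu s) + ((mu' s * src s * mu s - J s * mu' s) / (mu s * mu s)) * s) (at s)"
    using s0 mu_s by (intro DERIV_mult DERIV_ident DERIV_divide dJ mu_has_real_derivative) auto
  moreover have "1 * (J s / mu s) + ((mu' s * src s * mu s - J s * mu' s) / (mu s * mu s)) * s
      = (rho s - w s / 2) / s\<^sup>2"
  proof -
    have ratio: "s * mu' s / mu s = (1 + 2 * s\<^sup>2) / (2 * s\<^sup>2)"
      using s0 by (simp add: mu_def mu'_def field_simps)
    have "1 * (J s / mu s) + ((mu' s * src s * mu s - J s * mu' s) / (mu s * mu s)) * s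
        = w s + s * mu' s / mu s * (src s - w s)"
      using w_J[OF s] mu_s by (simp add: field_simps)
    also have "\<dots> = w s + (1 + 2 * s\<^sup>2) / (2 * s\<^sup>2) * (2 * rho s / (1 + 2 * s\<^sup>2) - w s)"
      by (simp only: ratio src_def)
    also have "\<dots> = w s + rho s / s\<^sup>2 - (1 + 2 * s\<^sup>2) / (2 * s\<^sup>2) * w s"
      using one_plus_two_sq_pos[of s] by (simp add: right_diff_distrib)
    also have "\<dots> = (rho s - w s / 2) / s\<^sup>2"
      using s0 by (simp add: field_simps)
    finally show ?thesis .
  qed
  ultimately have "((\<lambda>x. x * (J x / mu x)) has_real_derivative (rho s - w s / 2) / s\<^sup>2) (at s)"
    by simp
  then show ?thesis
    by (rule has_field_derivative_transform_within_open[OF _ open_greaterThanLessThan s])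
      (simp add: w_J)
qed

section \<open>Reduction to a fixed-point problem\<close>

definition V_of :: "real \<Rightarrow> (real \<Rightarrow> real) \<Rightarrow> real \<Rightarrow> real" where
  "V_of M w s = M + integral {0..s} (\<lambda>t. t * w t)"

definition nonlin :: "real \<Rightarrow> real \<Rightarrow> real \<Rightarrow> real \<Rightarrow> real" where
  "nonlin n t v w = (n - 2) * v * (2 - v) + t\<^sup>2 * (v - (5 - n)) * w"

definition source :: "real \<Rightarrow> real \<Rightarrow> (real \<Rightarrow> real) \<Rightarrow> real \<Rightarrow> real" where
  "source n M w t = 2 * nonlin n t (V_of M w t) (w t) / (1 + 2 * t\<^sup>2)"

definition picard :: "real \<Rightarrow> real \<Rightarrow> (real \<Rightarrow> real) \<Rightarrow> real \<Rightarrow> real" where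
  "picard n M w = mu_weight.mean (source n M w)"

lemma V_of_0 [simp]: "V_of M w 0 = M"
  by (simp add: V_of_def)

lemma continuous_on_V_of: "continuous_on {0..L} w \<Longrightarrow> continuous_on {0..L} (V_of M w)"
  unfolding V_of_def
  by (intro continuous_intros indefinite_integral_continuous_1 integrable_continuous_interval)

lemma V_of_has_real_derivative:
  assumes w: "continuous_on {0..L} w" and s: "s \<in> {0<..<L}"
  shows "(V_of M w has_real_derivative s * w s) (at s)"
proof -
  have "((\<lambda>x. integral {0..x} (\<lambda>t. t * w t)) has_real_derivative s * w s) (at s within {0..L})"
    using s by (intro integral_has_real_derivative continuous_intros w) auto
  moreover have "at s within {0..L} = at s"
    using s by (intro at_within_interior) simp
  ultimately show ?thesis
    unfolding V_of_def by (auto intro: derivative_eq_intros)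
qed

lemma continuous_on_nonlin_V_of:
  "continuous_on {0..L} w \<Longrightarrow> continuous_on {0..L} (\<lambda>t. nonlin n t (V_of M w t) (w t))"
  unfolding nonlin_def by (intro continuous_intros continuous_on_V_of)

lemma continuous_on_source: "continuous_on {0..L} w \<Longrightarrow> continuous_on {0..L} (source n M w)"
  unfolding source_def[abs_def]
  by (intro continuous_intros continuous_on_nonlin_V_of)
    (auto simp: one_plus_two_sq_pos[THEN less_imp_neq, symmetric])

lemma continuous_on_picard: "continuous_on {0..L} w \<Longrightarrow> continuous_on {0..L} (picard n M w)"
  unfolding picard_def by (intro mu_weight.continuous_on_mean continuous_on_source)

lemma picard_fixed_point_local_solution:
  assumes w: "continuous_on {0..L} w" and L: "0 < L"
    and fixed: "\<And>x. x \<in> {0..L} \<Longrightarrow> w x = picard (real N) M w x"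
  shows "local_solution N M L (V_of M w)"
proof -
  define rho where "rho t = nonlin (real N) t (V_of M w t) (w t)" for t
  define V2 where "V2 s = (rho s - w s / 2) / s\<^sup>2" for s
  have rho: "continuous_on {0..L} rho"
    unfolding rho_def by (rule continuous_on_nonlin_V_of[OF w])
  have V1: "(V_of M w has_real_derivative s * w s) (at s)" if "s \<in> {0<..<L}" for s
    using w that by (rule V_of_has_real_derivative)
  have V2: "((\<lambda>x. x * w x) has_real_derivative V2 s) (at s)" if "s \<in> {0<..<L}" for s
    unfolding V2_def using rho _ that
    by (rule mu_mean_solves_linear_ode) (simp add: fixed picard_def source_def[abs_def] rho_def)
  have "continuous_on {0<..<L} V2"
    unfolding V2_def
    by (intro continuous_intros continuous_on_subset[OF rho] continuous_on_subset[OF w]) auto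
  moreover have "V2 s + (5 - real N) * (s * w s) / s + (s * w s) / (2 * s ^ 3)
      - (s * w s) * V_of M w s / s - 2 * (real N - 2) * V_of M w s / s\<^sup>2
      + (real N - 2) * (V_of M w s)\<^sup>2 / s\<^sup>2 = 0" if "s \<in> {0<..<L}" for s
    using that by (simp add: V2_def rho_def nonlin_def field_simps power2_eq_square power3_eq_cube)
  ultimately show ?thesis
    unfolding local_solution_def using L V1 V2 continuous_on_V_of[OF w]
    by (intro conjI exI[of _ "\<lambda>s. s * w s"] exI[of _ V2]) auto
qed

section \<open>Contraction estimates\<close>

lemma abs_V_of_diff_le:
  assumes w1: "continuous_on {0..t} w1" and w2: "continuous_on {0..t} w2" and t: "0 \<le> t"
    and D: "\<And>\<tau>. \<tau> \<in> {0..t} \<Longrightarrow> \<bar>w1 \<tau> - w2 \<tau>\<bar> \<le> D"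
  shows "\<bar>V_of M w1 t - V_of M w2 t\<bar> \<le> t\<^sup>2 * D"
proof -
  have "V_of M w1 t - V_of M w2 t = integral {0..t} (\<lambda>\<tau>. \<tau> * (w1 \<tau> - w2 \<tau>))"
    unfolding V_of_def right_diff_distrib
    by (simp add: integral_diff integrable_continuous_interval continuous_intros w1 w2)
  also have "\<bar>\<dots>\<bar> \<le> integral {0..t} (\<lambda>_. t * D)"
    unfolding real_norm_def[symmetric]
  proof (rule integral_norm_bound_integral)
    show "(\<lambda>\<tau>. \<tau> * (w1 \<tau> - w2 \<tau>)) integrable_on {0..t}"
      by (intro integrable_continuous_interval continuous_intros w1 w2)
    show "norm (\<tau> * (w1 \<tau> - w2 \<tau>)) \<le> t * D" if "\<tau> \<in> {0..t}" for \<tau>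
      using that D[OF that] by (auto simp: abs_mult intro: mult_mono)
  qed (rule integrable_const_ivl)
  also have "\<dots> = t\<^sup>2 * D"
    using t by (simp add: power2_eq_square)
  finally show ?thesis .
qed

lemma abs_V_of_le:
  assumes "continuous_on {0..t} w" "0 \<le> t" "\<And>\<tau>. \<tau> \<in> {0..t} \<Longrightarrow> \<bar>w \<tau>\<bar> \<le> R"
  shows "\<bar>V_of M w t - M\<bar> \<le> t\<^sup>2 * R"
  using abs_V_of_diff_le[of t w "\<lambda>_. 0"] assms by (simp add: V_of_def)

lemma abs_V_of_le_one:
  assumes w: "continuous_on {0..L} w" and R: "\<And>t. t \<in> {0..L} \<Longrightarrow> \<bar>w t\<bar> \<le> R"
    and LR: "L\<^sup>2 * R \<le> 1" and t: "t \<in> {0..L}"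
  shows "\<bar>V_of M w t - M\<bar> \<le> 1"
proof -
  have "\<bar>V_of M w t - M\<bar> \<le> t\<^sup>2 * R"
    using t R by (intro abs_V_of_le continuous_on_subset[OF w]) auto
  also have "\<dots> \<le> L\<^sup>2 * R"
    using t R[OF t] by (intro mult_right_mono power_mono) auto
  finally show ?thesis
    using LR by linarith
qed

lemma abs_nonlin_le:
  assumes n: "2 \<le> n" and v: "\<bar>v - M\<bar> \<le> 1" and w: "\<bar>w\<bar> \<le> R"
    and t: "t\<^sup>2 * (\<bar>M\<bar> + 1 + \<bar>5 - n\<bar>) \<le> 1 / 4"
  shows "\<bar>nonlin n t v w\<bar> \<le> (n - 2) * (\<bar>M\<bar> + 1) * (\<bar>M\<bar> + 3) + R / 4"
proof -
  have "\<bar>(n - 2) * v * (2 - v)\<bar> \<le> (n - 2) * (\<bar>M\<bar> + 1) * (\<bar>M\<bar> + 3)"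
    unfolding abs_mult using n v by (intro mult_mono) auto
  moreover have "\<bar>t\<^sup>2 * (v - (5 - n)) * w\<bar> \<le> t\<^sup>2 * (\<bar>M\<bar> + 1 + \<bar>5 - n\<bar>) * R"
    unfolding abs_mult using v w by (intro mult_mono) auto
  moreover have "t\<^sup>2 * (\<bar>M\<bar> + 1 + \<bar>5 - n\<bar>) * R \<le> R / 4"
    using mult_right_mono[OF t, of R] w by simp
  ultimately show ?thesis
    unfolding nonlin_def by linarith
qed

lemma abs_nonlin_diff_le:
  assumes n: "2 \<le> n" and v1: "\<bar>v1 - M\<bar> \<le> 1" and v2: "\<bar>v2 - M\<bar> \<le> 1"
    and w1: "\<bar>w1\<bar> \<le> R" and t: "t\<^sup>2 * R \<le> 1"
  shows "\<bar>nonlin n t v1 w1 - nonlin n t v2 w2\<bar>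
    \<le> ((n - 2) * (2 * \<bar>M\<bar> + 4) + 1) * \<bar>v1 - v2\<bar> + t\<^sup>2 * (\<bar>M\<bar> + 1 + \<bar>5 - n\<bar>) * \<bar>w1 - w2\<bar>"
proof -
  define a where "a = (n - 2) * (2 - v1 - v2) + t\<^sup>2 * w1"
  define b where "b = t\<^sup>2 * (v2 - (5 - n))"
  have "\<bar>2 - v1 - v2\<bar> \<le> 2 * \<bar>M\<bar> + 4"
    using v1 v2 by linarith
  then have "\<bar>(n - 2) * (2 - v1 - v2)\<bar> \<le> (n - 2) * (2 * \<bar>M\<bar> + 4)"
    using n by (simp add: abs_mult mult_left_mono)
  moreover have "\<bar>t\<^sup>2 * w1\<bar> \<le> 1"
    using mult_left_mono[OF w1, of "t\<^sup>2"] t by (simp add: abs_mult)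
  ultimately have a: "\<bar>a\<bar> \<le> (n - 2) * (2 * \<bar>M\<bar> + 4) + 1"
    unfolding a_def by linarith
  have "\<bar>v2 - (5 - n)\<bar> \<le> \<bar>M\<bar> + 1 + \<bar>5 - n\<bar>"
    using v2 by linarith
  then have b: "\<bar>b\<bar> \<le> t\<^sup>2 * (\<bar>M\<bar> + 1 + \<bar>5 - n\<bar>)"
    unfolding b_def by (simp add: abs_mult mult_left_mono)
  have "nonlin n t v1 w1 - nonlin n t v2 w2 = a * (v1 - v2) + b * (w1 - w2)"
    by (simp add: nonlin_def a_def b_def algebra_simps)
  also have "\<bar>\<dots>\<bar> \<le> \<bar>a\<bar> * \<bar>v1 - v2\<bar> + \<bar>b\<bar> * \<bar>w1 - w2\<bar>"
    by (metis abs_mult abs_triangle_ineq)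
  also have "\<dots> \<le> ((n - 2) * (2 * \<bar>M\<bar> + 4) + 1) * \<bar>v1 - v2\<bar> + t\<^sup>2 * (\<bar>M\<bar> + 1 + \<bar>5 - n\<bar>) * \<bar>w1 - w2\<bar>"
    using a b by (intro add_mono mult_right_mono) auto
  finally show ?thesis .
qed

lemma abs_div_one_plus_two_sq_le: "\<bar>x / (1 + 2 * t\<^sup>2)\<bar> \<le> \<bar>x :: real\<bar>"
  using one_plus_two_sq_pos[of t] by (simp add: abs_divide divide_le_eq mult_le_cancel_left1)

lemma abs_source_le:
  assumes n: "2 \<le> n" and w: "continuous_on {0..L} w" and R: "\<And>t. t \<in> {0..L} \<Longrightarrow> \<bar>w t\<bar> \<le> R"
    and LR: "L\<^sup>2 * R \<le> 1" and LQ: "L\<^sup>2 * (\<bar>M\<bar> + 1 + \<bar>5 - n\<bar>) \<le> 1 / 4"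
    and R_large: "(n - 2) * (\<bar>M\<bar> + 1) * (\<bar>M\<bar> + 3) \<le> R / 4"
    and t: "t \<in> {0..L}"
  shows "\<bar>source n M w t\<bar> \<le> R"
proof -
  have "t\<^sup>2 * (\<bar>M\<bar> + 1 + \<bar>5 - n\<bar>) \<le> L\<^sup>2 * (\<bar>M\<bar> + 1 + \<bar>5 - n\<bar>)"
    using t by (intro mult_right_mono power_mono) auto
  then have "t\<^sup>2 * (\<bar>M\<bar> + 1 + \<bar>5 - n\<bar>) \<le> 1 / 4"
    using LQ by (rule order_trans)
  then have "\<bar>nonlin n t (V_of M w t) (w t)\<bar> \<le> (n - 2) * (\<bar>M\<bar> + 1) * (\<bar>M\<bar> + 3) + R / 4"
    using abs_nonlin_le[OF n abs_V_of_le_one[OF w R LR t] R[OF t]] by simp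
  moreover have "\<bar>source n M w t\<bar> \<le> 2 * \<bar>nonlin n t (V_of M w t) (w t)\<bar>"
    using abs_div_one_plus_two_sq_le[of "2 * nonlin n t (V_of M w t) (w t)" t]
    by (simp add: source_def abs_mult)
  ultimately show ?thesis
    using R_large by linarith
qed

lemma abs_source_diff_le:
  assumes n: "2 \<le> n"
    and w1: "continuous_on {0..L} w1" and w2: "continuous_on {0..L} w2"
    and R1: "\<And>t. t \<in> {0..L} \<Longrightarrow> \<bar>w1 t\<bar> \<le> R" and R2: "\<And>t. t \<in> {0..L} \<Longrightarrow> \<bar>w2 t\<bar> \<le> R"
    and D: "\<And>t. t \<in> {0..L} \<Longrightarrow> \<bar>w1 t - w2 t\<bar> \<le> D"
    and LR: "L\<^sup>2 * R \<le> 1" and t: "t \<in> {0..L}"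
  shows "\<bar>source n M w1 t - source n M w2 t\<bar>
    \<le> 2 * L\<^sup>2 * ((n - 2) * (2 * \<bar>M\<bar> + 4) + 1 + (\<bar>M\<bar> + 1 + \<bar>5 - n\<bar>)) * D"
proof -
  define C where "C = (n - 2) * (2 * \<bar>M\<bar> + 4) + 1"
  define Q where "Q = \<bar>M\<bar> + 1 + \<bar>5 - n\<bar>"
  define d where "d = nonlin n t (V_of M w1 t) (w1 t) - nonlin n t (V_of M w2 t) (w2 t)"
  have C0: "0 \<le> C" and Q0: "0 \<le> Q" and D0: "0 \<le> D"
    using n D[OF t] by (auto simp: C_def Q_def)
  have t2: "t\<^sup>2 \<le> L\<^sup>2"
    using t by (auto intro: power_mono)
  have tR: "t\<^sup>2 * R \<le> 1"
    using mult_right_mono[OF t2, of R] R1[OF t] LR by linarith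
  have dV: "\<bar>V_of M w1 t - V_of M w2 t\<bar> \<le> t\<^sup>2 * D"
    using t D by (intro abs_V_of_diff_le continuous_on_subset[OF w1] continuous_on_subset[OF w2]) auto
  have "\<bar>d\<bar> \<le> C * \<bar>V_of M w1 t - V_of M w2 t\<bar> + t\<^sup>2 * Q * \<bar>w1 t - w2 t\<bar>"
    unfolding d_def C_def Q_def
    by (rule abs_nonlin_diff_le[OF n abs_V_of_le_one[OF w1 R1 LR t] abs_V_of_le_one[OF w2 R2 LR t] R1[OF t] tR])
  also have "\<dots> \<le> C * (t\<^sup>2 * D) + t\<^sup>2 * Q * D"
    using dV D[OF t] C0 Q0 by (intro add_mono mult_left_mono) auto
  also have "\<dots> = t\<^sup>2 * (C + Q) * D"
    by (simp add: algebra_simps)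
  also have "\<dots> \<le> L\<^sup>2 * (C + Q) * D"
    using t2 C0 Q0 D0 by (intro mult_right_mono) auto
  finally have "\<bar>d\<bar> \<le> L\<^sup>2 * (C + Q) * D" .
  moreover have "source n M w1 t - source n M w2 t = 2 * d / (1 + 2 * t\<^sup>2)"
    by (simp add: source_def d_def diff_divide_distrib right_diff_distrib)
  then have "\<bar>source n M w1 t - source n M w2 t\<bar> \<le> 2 * \<bar>d\<bar>"
    using abs_div_one_plus_two_sq_le[of "2 * d" t] by (simp only: abs_mult abs_numeral)
  ultimately show ?thesis
    unfolding C_def Q_def by linarith
qed

lemma abs_picard_le:
  assumes n: "2 \<le> n" and w: "continuous_on {0..L} w" and R: "\<And>t. t \<in> {0..L} \<Longrightarrow> \<bar>w t\<bar> \<le> R"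
    and LR: "L\<^sup>2 * R \<le> 1" and LQ: "L\<^sup>2 * (\<bar>M\<bar> + 1 + \<bar>5 - n\<bar>) \<le> 1 / 4"
    and R_large: "(n - 2) * (\<bar>M\<bar> + 1) * (\<bar>M\<bar> + 3) \<le> R / 4"
    and s: "s \<in> {0..L}"
  shows "\<bar>picard n M w s\<bar> \<le> R"
  unfolding picard_def using s
  by (intro mu_weight.abs_mean_le abs_source_le[OF n w R LR LQ R_large]
      continuous_on_subset[OF continuous_on_source[OF w]]) auto

lemma abs_picard_diff_le:
  assumes n: "2 \<le> n"
    and w1: "continuous_on {0..L} w1" and w2: "continuous_on {0..L} w2"
    and R1: "\<And>t. t \<in> {0..L} \<Longrightarrow> \<bar>w1 t\<bar> \<le> R" and R2: "\<And>t. t \<in> {0..L} \<Longrightarrow> \<bar>w2 t\<bar> \<le> R"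
    and D: "\<And>t. t \<in> {0..L} \<Longrightarrow> \<bar>w1 t - w2 t\<bar> \<le> D"
    and LR: "L\<^sup>2 * R \<le> 1" and s: "s \<in> {0..L}"
  shows "\<bar>picard n M w1 s - picard n M w2 s\<bar>
    \<le> 2 * L\<^sup>2 * ((n - 2) * (2 * \<bar>M\<bar> + 4) + 1 + (\<bar>M\<bar> + 1 + \<bar>5 - n\<bar>)) * D"
proof -
  have cont: "continuous_on {0..s} (source n M w)" if "continuous_on {0..L} w" for w
    using s by (intro continuous_on_subset[OF continuous_on_source[OF that]]) auto
  have "picard n M w1 s - picard n M w2 s = mu_weight.mean (\<lambda>t. source n M w1 t - source n M w2 t) s"
    unfolding picard_def by (rule mu_weight.mean_diff[symmetric, OF cont[OF w1] cont[OF w2]])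
  also have "\<bar>\<dots>\<bar> \<le> 2 * L\<^sup>2 * ((n - 2) * (2 * \<bar>M\<bar> + 4) + 1 + (\<bar>M\<bar> + 1 + \<bar>5 - n\<bar>)) * D"
    using s by (intro mu_weight.abs_mean_le continuous_intros cont w1 w2
        abs_source_diff_le[OF n w1 w2 R1 R2 D LR]) auto
  finally show ?thesis .
qed

lemma picard_has_fixed_point:
  assumes n: "2 \<le> n"
  shows "\<exists>L>0. \<exists>w. continuous_on UNIV w \<and> (\<forall>x\<in>{0..L}. w x = picard n M w x)"
proof -
  define C where "C = (n - 2) * (2 * \<bar>M\<bar> + 4) + 1"
  define Q where "Q = \<bar>M\<bar> + 1 + \<bar>5 - n\<bar>"
  define R where "R = 4 * ((n - 2) * (\<bar>M\<bar> + 1) * (\<bar>M\<bar> + 3))"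
  define Z where "Z = R + 4 * Q + 4 * (C + Q)"
  define L where "L = 1 / sqrt Z"
  have R: "0 \<le> R" and Q: "1 \<le> Q" and C: "1 \<le> C"
    using n by (auto simp: R_def Q_def C_def)
  then have Z: "0 < Z" and L: "0 < L" and L2: "L\<^sup>2 = 1 / Z"
    by (auto simp: Z_def L_def power_divide)
  have LR: "L\<^sup>2 * R \<le> 1" and LQ: "L\<^sup>2 * Q \<le> 1 / 4" and LCQ: "2 * L\<^sup>2 * (C + Q) \<le> 1 / 2"
    using Z R Q C by (auto simp: L2 Z_def field_simps)
  have "\<exists>w. continuous_on UNIV w \<and> (\<forall>x\<in>{0..L}. w x = picard n M w x)"
  proof (rule Banach_fix_on_interval[where R = R and c = "1 / 2"])
    fix w :: "real \<Rightarrow> real" and x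
    assume "continuous_on UNIV w" "\<And>y. \<bar>w y\<bar> \<le> R" "x \<in> {0..L}"
    then show "\<bar>picard n M w x\<bar> \<le> R"
      using n LR LQ by (intro abs_picard_le) (auto simp: Q_def R_def intro: continuous_on_subset)
  next
    fix w1 w2 :: "real \<Rightarrow> real" and D x
    assume w: "continuous_on UNIV w1" "continuous_on UNIV w2" "\<And>y. \<bar>w1 y\<bar> \<le> R"
      "\<And>y. \<bar>w2 y\<bar> \<le> R" and D: "\<And>y. \<bar>w1 y - w2 y\<bar> \<le> D" and x: "x \<in> {0..L}"
    have "\<bar>picard n M w1 x - picard n M w2 x\<bar> \<le> 2 * L\<^sup>2 * (C + Q) * D"
      unfolding C_def Q_def using n w D LR x
      by (intro abs_picard_diff_le) (auto intro: continuous_on_subset)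
    also have "\<dots> \<le> 1 / 2 * D"
      using mult_right_mono[OF LCQ, of D] D[of 0] by linarith
    finally show "\<bar>picard n M w1 x - picard n M w2 x\<bar> \<le> 1 / 2 * D" .
  qed (use L R in \<open>auto intro: continuous_on_picard continuous_on_subset\<close>)
  then show ?thesis
    using L by blast
qed

lemma local_solution_exists:
  fixes N :: nat
  assumes "2 \<le> N"
  shows "\<exists>L V. local_solution N M L V"
proof -
  obtain L w where "0 < L" "continuous_on UNIV w" "\<And>x. x \<in> {0..L} \<Longrightarrow> w x = picard (real N) M w x"
    using picard_has_fixed_point[of "real N" M] assms by auto
  then have "local_solution N M L (V_of M w)"
    by (intro picard_fixed_point_local_solution) (auto intro: continuous_on_subset)
  then show ?thesis
    by blast
qed

theorem theorem3p1:
  fixes N :: nat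
  assumes "N \<ge> 3"
  shows "\<exists>S :: real set. S \<subseteq> {0<..} \<and> {0<..} \<subseteq> closure S \<and>
           (\<forall>M\<in>S. \<exists>L V. local_solution N M L V)"
proof -
  have "\<forall>M\<in>{0<..}. \<exists>L V. local_solution N M L V"
    using assms by (simp add: local_solution_exists)
  then show ?thesis
    by (intro exI[of _ "{0<..}"] conjI subset_refl closure_subset)
qed

end
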